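(* Let $K$ be an imaginary quadratic field, let $f\ge1$, and let $A=\mathbb{C}/\mathcal{O}_f\times\mathbb{C}/\mathfrak{a}$, where $\mathfrak{a}\subset K$ is a lattice whose conductor divides $f$. If $F\subset A$ is an elliptic curve, then the conductor of $F$ divides $f$.
   Context: $\mathcal{O}_m=\mathbb{Z}+m\mathcal{O}_K$. A lattice in $K$ is a free abelian subgroup of rank 2; its conductor is the $m$ with $\{\alpha\in K:\alpha\mathfrak{a}\subset\mathfrak{a}\}=\mathcal{O}_m$. An elliptic curve $F\subset A$ has CM by $K$, so $F\cong\mathbb{C}/\mathfrak{b}$ for a lattice $\mathfrak{b}\subset K$, and its conductor is that of $\mathfrak{b}$. *)

theory Defs
  imports "HOL-Analysis.Analysis" "HOL-Computational_Algebra.Polynomial"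
    "HOL-Computational_Algebra.Squarefree"
begin

definition imag_quad_field :: "int \<Rightarrow> complex set" where
  "imag_quad_field d = {of_rat a + of_rat b * (\<i> * complex_of_real (sqrt (real_of_int d))) | a b. True}"

definition alg_integer :: "complex \<Rightarrow> bool" where
  "alg_integer x \<longleftrightarrow> (\<exists>p :: int poly. lead_coeff p = 1 \<and> poly (map_poly of_int p) x = 0)"

definition ring_of_integers :: "complex set \<Rightarrow> complex set" where
  "ring_of_integers K = {x \<in> K. alg_integer x}"

definition order_of_conductor :: "complex set \<Rightarrow> nat \<Rightarrow> complex set" where
  "order_of_conductor K m = {of_int n + of_nat m * x | n x. x \<in> ring_of_integers K}"

definition lattice_in :: "complex set \<Rightarrow> complex set \<Rightarrow> bool" where
  "lattice_in K L \<longleftrightarrow> (\<exists>w1 w2. w1 \<in> K \<and> w2 \<in> K \<and>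
      (\<forall>m n :: int. of_int m * w1 + of_int n * w2 = 0 \<longrightarrow> m = 0 \<and> n = 0) \<and>
      L = {of_int m * w1 + of_int n * w2 | m n :: int. True})"

definition has_conductor :: "complex set \<Rightarrow> complex set \<Rightarrow> nat \<Rightarrow> bool" where
  "has_conductor K L m \<longleftrightarrow> m \<ge> 1 \<and> {\<alpha> \<in> K. \<forall>x \<in> L. \<alpha> * x \<in> L} = order_of_conductor K m"

text \<open>Lattice of C^2 underlying A = C/O_f x C/a.\<close>
definition prod_lattice :: "complex set \<Rightarrow> complex set \<Rightarrow> (complex \<times> complex) set" where
  "prod_lattice L1 L2 = L1 \<times> L2"

text \<open>An elliptic curve F in the complex torus C^2/Lam is the image of a complex line
  W = C v (v nonzero) such that W \<inter> Lam spans W over R (so W/(W \<inter> Lam) is compact).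
  Then F is isomorphic to C/b with b = {z. z v \<in> Lam}.\<close>
definition line_lattice :: "(complex \<times> complex) set \<Rightarrow> complex \<times> complex \<Rightarrow> complex set" where
  "line_lattice Lam v = {z. (z * fst v, z * snd v) \<in> Lam}"

definition elliptic_subtorus :: "(complex \<times> complex) set \<Rightarrow> complex \<times> complex \<Rightarrow> bool" where
  "elliptic_subtorus Lam v \<longleftrightarrow> v \<noteq> (0, 0) \<and>
     (\<exists>z1 \<in> line_lattice Lam v. \<exists>z2 \<in> line_lattice Lam v. Im (z2 * cnj z1) \<noteq> 0)"

end

theory Submission
  imports Defs
begin

text \<open>
  Write \<open>v = (v\<^sub>1, v\<^sub>2)\<close>. If \<open>v\<^sub>1 = 0\<close> the curve is \<open>\<complex>/\<aa>\<close>. Otherwise, scaled by \<open>v\<^sub>1\<close>,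
  its lattice is \<open>B = {y \<in> \<O>\<^sub>f. y w \<in> \<aa>}\<close> with \<open>w = v\<^sub>2 / v\<^sub>1\<close>, a full-rank subgroup of the
  lattice \<open>\<O>\<^sub>f\<close> and hence itself a lattice. Its multiplier ring contains \<open>\<O>\<^sub>f\<close>, since
  \<open>\<O>\<^sub>f \<subseteq> \<O>\<^sub>m\<close> stabilises \<open>\<aa>\<close> for \<open>m\<close> dividing \<open>f\<close>, and it lies in \<open>\<O>\<^sub>K\<close>, because by
  Cayley--Hamilton every multiplier of a lattice is a root of a monic integer quadratic.
  Finally every additive group between \<open>\<O>\<^sub>f\<close> and \<open>\<O>\<^sub>K = \<int> + \<int>\<omega>\<close> equals \<open>\<int> + g\<int>\<omega>\<close>,
  where \<open>g\<int>\<close> is the group of its \<open>\<omega>\<close>-coordinates, and \<open>g\<close> divides \<open>f\<close>.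
\<close>

section \<open>Additive subgroups\<close>

definition add_subgroup :: "'a::ab_group_add set \<Rightarrow> bool" where
  "add_subgroup H \<longleftrightarrow> 0 \<in> H \<and> (\<forall>x\<in>H. \<forall>y\<in>H. x - y \<in> H)"

lemma add_subgroup_0: "add_subgroup H \<Longrightarrow> 0 \<in> H"
  by (simp add: add_subgroup_def)

lemma add_subgroup_diff: "add_subgroup H \<Longrightarrow> x \<in> H \<Longrightarrow> y \<in> H \<Longrightarrow> x - y \<in> H"
  by (simp add: add_subgroup_def)

lemma add_subgroup_uminus: "add_subgroup H \<Longrightarrow> x \<in> H \<Longrightarrow> - x \<in> H"
  using add_subgroup_diff[of H 0 x] add_subgroup_0[of H] by simp

lemma add_subgroup_add: "add_subgroup H \<Longrightarrow> x \<in> H \<Longrightarrow> y \<in> H \<Longrightarrow> x + y \<in> H"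
  using add_subgroup_diff[of H x "-y"] add_subgroup_uminus[of H y] by simp

lemma add_subgroup_of_int_mult:
  fixes H :: "'a::ring_1 set"
  assumes "add_subgroup H" "x \<in> H"
  shows "of_int k * x \<in> H"
proof (induction k rule: int_induct[where k = 0])
  case base
  then show ?case using add_subgroup_0[OF assms(1)] by simp
next
  case (step1 i)
  have "of_int (i + 1) * x = of_int i * x + x" by (simp add: algebra_simps)
  then show ?case using add_subgroup_add[OF assms(1) step1(2) assms(2)] by simp
next
  case (step2 i)
  have "of_int (i - 1) * x = of_int i * x - x" by (simp add: algebra_simps)
  then show ?case using add_subgroup_diff[OF assms(1) step2(2) assms(2)] by simp
qed

lemma add_subgroup_sum:
  assumes "add_subgroup H" "finite A" "\<And>i. i \<in> A \<Longrightarrow> f i \<in> H"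
  shows "sum f A \<in> H"
  using assms(2,3)
proof (induction A rule: finite_induct)
  case empty
  then show ?case using add_subgroup_0[OF assms(1)] by simp
next
  case (insert a A)
  then show ?case using add_subgroup_add[OF assms(1)] by simp
qed

lemma int_add_subgroup_eq_multiples:
  fixes S :: "int set"
  assumes "add_subgroup S"
  shows "\<exists>g\<ge>0. S = {k * g | k. True}"
proof (cases "\<exists>x\<in>S. x > 0")
  case False
  have "S = {0}"
  proof safe
    fix x assume "x \<in> S"
    then have "\<not> x > 0" "\<not> - x > 0" using False add_subgroup_uminus[OF assms \<open>x \<in> S\<close>] by auto
    then show "x = 0" by linarith
  qed (use add_subgroup_0[OF assms] in auto)
  then show ?thesis by (intro exI[of _ 0]) auto
next
  case True
  define g where "g = int (LEAST n::nat. int n \<in> S \<and> n > 0)"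
  obtain x0 where "x0 \<in> S" "x0 > 0" using True by auto
  then have g: "g \<in> S" "g > 0"
    unfolding g_def using LeastI[of "\<lambda>n. int n \<in> S \<and> n > 0" "nat x0"] by auto
  have g_min: "g \<le> y" if "y \<in> S" "y > 0" for y
  proof -
    have "(LEAST n::nat. int n \<in> S \<and> n > 0) \<le> nat y" by (rule Least_le) (use that in auto)
    then show ?thesis unfolding g_def using that by linarith
  qed
  have multiples: "k * g \<in> S" for k
    using add_subgroup_of_int_mult[OF assms g(1), of k] by simp
  have "S = {k * g | k. True}"
  proof (intro set_eqI iffI)
    fix x assume "x \<in> S"
    have "x mod g = x - (x div g) * g" by (simp add: minus_div_mult_eq_mod)
    also have "\<dots> \<in> S" by (rule add_subgroup_diff[OF assms \<open>x \<in> S\<close> multiples])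
    finally have "x mod g = 0"
      using g_min[of "x mod g"] g(2) pos_mod_bound[of g x] pos_mod_sign[of g x] by linarith
    then have "x = (x div g) * g" by (metis div_mult_mod_eq add_0_right)
    then show "x \<in> {k * g | k. True}" by blast
  qed (use multiples in auto)
  then show ?thesis using g by (intro exI[of _ g]) auto
qed

section \<open>Lattices\<close>

lemma lattice_in_add_subgroup:
  assumes "lattice_in K L"
  shows "add_subgroup L"
proof -
  obtain w1 w2 where L: "L = {of_int m * w1 + of_int n * w2 | m n :: int. True}"
    using assms unfolding lattice_in_def by blast
  show ?thesis
    unfolding add_subgroup_def
  proof (intro conjI ballI)
    have "0 = of_int (0::int) * w1 + of_int (0::int) * w2" by simp
    then show "0 \<in> L" unfolding L by blast
    fix x y assume "x \<in> L" "y \<in> L"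
    then obtain m n m' n' where "x = of_int m * w1 + of_int n * w2" "y = of_int m' * w1 + of_int n' * w2"
      unfolding L by blast
    then have "x - y = of_int (m - m') * w1 + of_int (n - n') * w2" by (simp add: algebra_simps)
    then show "x - y \<in> L" unfolding L by blast
  qed
qed

lemma add_subgroup_first_coords:
  fixes u1 :: "'a::ring_1"
  assumes "add_subgroup H"
  shows "add_subgroup {m. of_int m * u1 \<in> H}"
  unfolding add_subgroup_def
proof (intro conjI ballI; simp)
  show "0 \<in> H" using add_subgroup_0[OF assms] .
  fix x y assume "of_int x * u1 \<in> H" "of_int y * u1 \<in> H"
  from add_subgroup_diff[OF assms this] show "(of_int x - of_int y) * u1 \<in> H"
    by (simp add: algebra_simps)
qed

lemma add_subgroup_second_coords:
  fixes u1 u2 :: "'a::ring_1"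
  assumes "add_subgroup H"
  shows "add_subgroup {n. \<exists>m. of_int m * u1 + of_int n * u2 \<in> H}"
  unfolding add_subgroup_def
proof (intro conjI ballI; simp)
  show "\<exists>m. of_int m * u1 \<in> H" using add_subgroup_0[OF assms] by (intro exI[of _ 0]) simp
  fix x y
  assume "\<exists>m. of_int m * u1 + of_int x * u2 \<in> H" "\<exists>m. of_int m * u1 + of_int y * u2 \<in> H"
  then obtain m m' where "of_int m * u1 + of_int x * u2 \<in> H" "of_int m' * u1 + of_int y * u2 \<in> H"
    by blast
  from add_subgroup_diff[OF assms this]
  have "of_int (m - m') * u1 + (of_int x - of_int y) * u2 \<in> H" by (simp add: algebra_simps)
  then show "\<exists>m. of_int m * u1 + (of_int x - of_int y) * u2 \<in> H" by blast
qed

lemma add_subgroup_triangular_span: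
  fixes u1 u2 :: "'a::comm_ring_1"
  assumes H: "add_subgroup H" "H \<subseteq> {of_int m * u1 + of_int n * u2 | m n. True}"
    and g1: "{m. of_int m * u1 \<in> H} = {k * g1 | k. True}"
    and g2: "{n. \<exists>m. of_int m * u1 + of_int n * u2 \<in> H} = {k * g2 | k. True}"
    and w2: "of_int s * u1 + of_int g2 * u2 \<in> H"
  shows "H = {of_int i * (of_int g1 * u1) + of_int j * (of_int s * u1 + of_int g2 * u2) | i j. True}"
proof (intro set_eqI iffI)
  fix z assume "z \<in> H"
  then obtain m n where z: "z = of_int m * u1 + of_int n * u2" using H(2) by blast
  then have "n \<in> {n. \<exists>m. of_int m * u1 + of_int n * u2 \<in> H}" using \<open>z \<in> H\<close> by blast
  then obtain j where j: "n = j * g2" using g2 by auto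
  have "z - of_int j * (of_int s * u1 + of_int g2 * u2) \<in> H"
    by (intro add_subgroup_diff[OF H(1) \<open>z \<in> H\<close>] add_subgroup_of_int_mult[OF H(1) w2])
  moreover have "z - of_int j * (of_int s * u1 + of_int g2 * u2) = of_int (m - j * s) * u1"
    unfolding z j by (simp add: algebra_simps)
  ultimately have "m - j * s \<in> {m. of_int m * u1 \<in> H}" by simp
  then obtain i where "m - j * s = i * g1" using g1 by blast
  then have "m = i * g1 + j * s" by simp
  then have "z = of_int i * (of_int g1 * u1) + of_int j * (of_int s * u1 + of_int g2 * u2)"
    unfolding z j by (simp add: algebra_simps)
  then show "z \<in> {of_int i * (of_int g1 * u1) + of_int j * (of_int s * u1 + of_int g2 * u2) | i j. True}"
    by blast
next
  fix z
  assume "z \<in> {of_int i * (of_int g1 * u1) + of_int j * (of_int s * u1 + of_int g2 * u2) | i j. True}"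
  moreover have "of_int g1 * u1 \<in> H" using g1 by force
  ultimately show "z \<in> H"
    using add_subgroup_add[OF H(1)] add_subgroup_of_int_mult[OF H(1)] w2 by blast
qed

lemma add_subgroup_of_rank_two_basis:
  fixes u1 u2 :: "'a::comm_ring_1"
  assumes H: "add_subgroup H" "H \<subseteq> {of_int m * u1 + of_int n * u2 | m n. True}"
    and indep: "\<And>m n. of_int m * u1 + of_int n * u2 = 0 \<Longrightarrow> m = 0 \<and> n = 0"
    and h: "of_int m1 * u1 + of_int n1 * u2 \<in> H" "of_int m2 * u1 + of_int n2 * u2 \<in> H"
    and det: "m1 * n2 \<noteq> m2 * n1"
  shows "\<exists>w1\<in>H. \<exists>w2\<in>H. (\<forall>i j. of_int i * w1 + of_int j * w2 = 0 \<longrightarrow> i = 0 \<and> j = 0) \<and>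
           H = {of_int i * w1 + of_int j * w2 | i j. True}"
proof -
  let ?S1 = "{m. of_int m * u1 \<in> H}" and ?S2 = "{n. \<exists>m. of_int m * u1 + of_int n * u2 \<in> H}"
  obtain g1 where g1: "?S1 = {k * g1 | k. True}"
    using int_add_subgroup_eq_multiples[OF add_subgroup_first_coords[OF H(1)]] by blast
  obtain g2 where g2: "?S2 = {k * g2 | k. True}"
    using int_add_subgroup_eq_multiples[OF add_subgroup_second_coords[OF H(1)]] by blast
  have "g2 \<noteq> 0"
  proof
    assume "g2 = 0"
    moreover have "n1 \<in> ?S2" "n2 \<in> ?S2" using h by blast+
    ultimately have "n1 = 0" "n2 = 0" using g2 by auto
    then show False using det by simp
  qed
  have "of_int n2 * (of_int m1 * u1 + of_int n1 * u2) - of_int n1 * (of_int m2 * u1 + of_int n2 * u2) \<in> H"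
    by (intro add_subgroup_diff[OF H(1)] add_subgroup_of_int_mult[OF H(1)] h)
  moreover have "of_int n2 * (of_int m1 * u1 + of_int n1 * u2) - of_int n1 * (of_int m2 * u1 + of_int n2 * u2)
      = of_int (n2 * m1 - n1 * m2) * u1"
    by (simp add: algebra_simps)
  ultimately have "n2 * m1 - n1 * m2 \<in> ?S1" by simp
  then obtain k where k: "n2 * m1 - n1 * m2 = k * g1" using g1 by auto
  have "g1 \<noteq> 0"
  proof
    assume "g1 = 0"
    then have "n2 * m1 = n1 * m2" using k by simp
    then show False using det by (simp add: ac_simps)
  qed
  have "g1 \<in> ?S1" using g1 by force
  then have w1: "of_int g1 * u1 \<in> H" by blast
  have "g2 \<in> ?S2" using g2 by force
  then obtain s where w2: "of_int s * u1 + of_int g2 * u2 \<in> H" by blast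
  have "i = 0 \<and> j = 0"
    if "of_int i * (of_int g1 * u1) + of_int j * (of_int s * u1 + of_int g2 * u2) = 0" for i j
  proof -
    have "of_int (i * g1 + j * s) * u1 + of_int (j * g2) * u2 = 0"
      using that by (simp add: algebra_simps)
    then have "i * g1 + j * s = 0 \<and> j * g2 = 0" by (rule indep)
    then show ?thesis using \<open>g1 \<noteq> 0\<close> \<open>g2 \<noteq> 0\<close> by auto
  qed
  with add_subgroup_triangular_span[OF H g1 g2 w2] w1 w2 show ?thesis by blast
qed

lemma Im_int_comb_mult_cnj:
  "Im ((of_int a * u + of_int b * v) * cnj (of_int c * u + of_int e * v)) =
     of_int (c * b - a * e) * Im (v * cnj u)"
  by (simp add: algebra_simps)

text \<open>\<open>Im (h\<^sub>2 cnj h\<^sub>1) \<noteq> 0\<close> says that \<open>h\<^sub>1, h\<^sub>2\<close> are \<open>\<real>\<close>-linearly independent.\<close>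

lemma lattice_in_full_rank_subgroup:
  assumes L: "lattice_in K L" and H: "add_subgroup H" "H \<subseteq> L" "H \<subseteq> K"
    and h: "h1 \<in> H" "h2 \<in> H" "Im (h2 * cnj h1) \<noteq> 0"
  shows "lattice_in K H"
proof -
  obtain u1 u2 where indep: "\<And>m n :: int. of_int m * u1 + of_int n * u2 = 0 \<Longrightarrow> m = 0 \<and> n = 0"
    and L_eq: "L = {of_int m * u1 + of_int n * u2 | m n :: int. True}"
    using L unfolding lattice_in_def by blast
  obtain m1 n1 m2 n2 where h1: "h1 = of_int m1 * u1 + of_int n1 * u2"
    and h2: "h2 = of_int m2 * u1 + of_int n2 * u2"
    using h(1,2) H(2) L_eq by blast
  have "Im (h2 * cnj h1) = of_int (m1 * n2 - m2 * n1) * Im (u2 * cnj u1)"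
    unfolding h1 h2 by (rule Im_int_comb_mult_cnj)
  then have "m1 * n2 - m2 * n1 \<noteq> 0" using h(3) by (metis mult_eq_0_iff of_int_0)
  then have "m1 * n2 \<noteq> m2 * n1" by simp
  from add_subgroup_of_rank_two_basis[OF H(1) _ indep h(1,2)[unfolded h1 h2] this] H(2) L_eq
  obtain w1 w2 where "w1 \<in> H" "w2 \<in> H"
    "\<forall>i j :: int. of_int i * w1 + of_int j * w2 = 0 \<longrightarrow> i = 0 \<and> j = 0"
    "H = {of_int i * w1 + of_int j * w2 | i j :: int. True}"
    by blast
  with H(3) show ?thesis unfolding lattice_in_def by blast
qed

lemma lattice_multiplier_quadratic:
  assumes "lattice_in K L" "\<forall>x\<in>L. \<alpha> * x \<in> L"
  shows "\<exists>T N :: int. \<alpha> * \<alpha> = of_int T * \<alpha> - of_int N"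
proof -
  obtain w1 w2 where indep: "\<forall>m n :: int. of_int m * w1 + of_int n * w2 = 0 \<longrightarrow> m = 0 \<and> n = 0"
    and L: "L = {of_int m * w1 + of_int n * w2 | m n :: int. True}"
    using assms(1) unfolding lattice_in_def by blast
  have "w1 = of_int 1 * w1 + of_int 0 * w2" "w2 = of_int 0 * w1 + of_int 1 * w2" by simp_all
  then have "w1 \<in> L" "w2 \<in> L" unfolding L by blast+
  have "w1 \<noteq> 0" using indep[rule_format, of 1 0] by auto
  obtain a b where ab: "\<alpha> * w1 = of_int a * w1 + of_int b * w2"
    using assms(2) \<open>w1 \<in> L\<close> L by blast
  obtain c e where ce: "\<alpha> * w2 = of_int c * w1 + of_int e * w2"
    using assms(2) \<open>w2 \<in> L\<close> L by blast
  \<comment> \<open>the characteristic polynomial of the matrix \<open>((a, c), (b, e))\<close> kills \<open>\<alpha>\<close>\<close>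
  have "((\<alpha> - of_int a) * (\<alpha> - of_int e) - of_int b * of_int c) * w1
      = (\<alpha> - of_int e) * (\<alpha> * w1 - of_int a * w1) - of_int b * of_int c * w1"
    by (simp add: algebra_simps)
  also have "\<dots> = of_int b * (\<alpha> * w2 - of_int e * w2 - of_int c * w1)"
    unfolding ab by (simp add: algebra_simps)
  also have "\<dots> = 0" unfolding ce by simp
  finally have "(\<alpha> - of_int a) * (\<alpha> - of_int e) - of_int b * of_int c = 0"
    using \<open>w1 \<noteq> 0\<close> by simp
  then have "\<alpha> * \<alpha> = of_int (a + e) * \<alpha> - of_int (a * e - b * c)"
    by (simp add: algebra_simps)
  then show ?thesis by blast
qed

section \<open>Coordinates in \<open>\<rat>(\<surd>-d)\<close>\<close>

definition sqrt_neg :: "int \<Rightarrow> complex" where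
  "sqrt_neg d = \<i> * complex_of_real (sqrt (real_of_int d))"

lemma Re_sqrt_neg [simp]: "Re (sqrt_neg d) = 0"
  by (simp add: sqrt_neg_def)

lemma Im_sqrt_neg [simp]: "Im (sqrt_neg d) = sqrt (real_of_int d)"
  by (simp add: sqrt_neg_def)

lemma sqrt_neg_squared: "d \<ge> 0 \<Longrightarrow> sqrt_neg d * sqrt_neg d = - of_int d"
  unfolding sqrt_neg_def by (simp add: algebra_simps flip: of_real_mult)

lemma complex_of_rat_eq_of_real: "(of_rat a :: complex) = of_real (of_rat a)"
  by (cases a) (simp add: of_rat_rat)

lemma Re_complex_of_rat [simp]: "Re (of_rat a) = of_rat a"
  by (simp add: complex_of_rat_eq_of_real)

lemma Im_complex_of_rat [simp]: "Im (of_rat a) = 0"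
  by (simp add: complex_of_rat_eq_of_real)

lemma imag_quad_field_iff: "z \<in> imag_quad_field d \<longleftrightarrow> (\<exists>a b. z = of_rat a + of_rat b * sqrt_neg d)"
  by (auto simp: imag_quad_field_def sqrt_neg_def)

definition denom_lattice :: "int \<Rightarrow> int \<Rightarrow> complex set" where
  "denom_lattice d D = {(of_int m + of_int n * sqrt_neg d) / of_int D | m n. True}"

lemma denom_lattice_iff:
  "z \<in> denom_lattice d D \<longleftrightarrow> (\<exists>m n. z = (of_int m + of_int n * sqrt_neg d) / of_int D)"
  unfolding denom_lattice_def by auto

locale imag_quadratic =
  fixes d :: int
  assumes d_pos: "d > 0"
begin

abbreviation K :: "complex set" where
  "K \<equiv> imag_quad_field d"

abbreviation \<theta> :: complex where
  "\<theta> \<equiv> sqrt_neg d"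

lemma sqrt_d_pos: "sqrt (real_of_int d) > 0"
  using d_pos by simp

lemma coords_unique:
  assumes "of_rat a + of_rat b * \<theta> = of_rat a' + of_rat b' * \<theta>"
  shows "a = a' \<and> b = b'"
  using arg_cong[OF assms, of Re] arg_cong[OF assms, of Im] sqrt_d_pos by simp

lemma imag_quad_field_diff: "x \<in> K \<Longrightarrow> y \<in> K \<Longrightarrow> x - y \<in> K"
proof -
  assume "x \<in> K" "y \<in> K"
  then obtain a b a' b' where "x = of_rat a + of_rat b * \<theta>" "y = of_rat a' + of_rat b' * \<theta>"
    unfolding imag_quad_field_iff by auto
  then have "x - y = of_rat (a - a') + of_rat (b - b') * \<theta>"
    by (simp add: algebra_simps of_rat_diff)
  then show ?thesis unfolding imag_quad_field_iff by blast
qed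

lemma imag_quad_field_mult: "x \<in> K \<Longrightarrow> y \<in> K \<Longrightarrow> x * y \<in> K"
proof -
  assume "x \<in> K" "y \<in> K"
  then obtain a b a' b' where x: "x = of_rat a + of_rat b * \<theta>" and y: "y = of_rat a' + of_rat b' * \<theta>"
    unfolding imag_quad_field_iff by auto
  have "x * y = of_rat a * of_rat a' + of_rat b * of_rat b' * (\<theta> * \<theta>)
      + (of_rat a * of_rat b' + of_rat b * of_rat a') * \<theta>"
    unfolding x y by (simp add: algebra_simps)
  also have "\<dots> = of_rat (a * a' - of_int d * b * b') + of_rat (a * b' + b * a') * \<theta>"
    using d_pos by (simp add: sqrt_neg_squared of_rat_add of_rat_mult of_rat_diff algebra_simps)
  finally show ?thesis unfolding imag_quad_field_iff by blast
qed

lemma imag_quad_field_of_int: "of_int n \<in> K"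
  unfolding imag_quad_field_iff by (intro exI[of _ "of_int n"] exI[of _ 0]) simp

lemma imag_quad_field_sqrt_neg: "\<theta> \<in> K"
  unfolding imag_quad_field_iff by (intro exI[of _ 0] exI[of _ 1]) simp

lemma imag_quad_field_add: "x \<in> K \<Longrightarrow> y \<in> K \<Longrightarrow> x + y \<in> K"
  using imag_quad_field_diff[of x "0 - y"] imag_quad_field_diff[of 0 y] imag_quad_field_of_int[of 0]
  by simp

lemma imag_quad_field_power: "x \<in> K \<Longrightarrow> x ^ i \<in> K"
  using imag_quad_field_of_int[of 1] imag_quad_field_mult by (induction i) auto

lemma denom_lattice_subset_field:
  assumes "D \<noteq> 0"
  shows "denom_lattice d D \<subseteq> K"
proof
  fix z assume "z \<in> denom_lattice d D"
  then obtain m n where "z = (of_int m + of_int n * \<theta>) / of_int D"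
    unfolding denom_lattice_iff by auto
  then have "z = of_rat (of_int m / of_int D) + of_rat (of_int n / of_int D) * \<theta>"
    using assms by (simp add: of_rat_divide field_simps)
  then show "z \<in> K" unfolding imag_quad_field_iff by blast
qed

lemma denom_lattice_lattice_in:
  assumes "D \<noteq> 0"
  shows "lattice_in K (denom_lattice d D)"
proof -
  define u1 u2 :: complex where "u1 = 1 / of_int D" and "u2 = \<theta> / of_int D"
  have "u1 = of_rat (1 / of_int D) + of_rat 0 * \<theta>" "u2 = of_rat 0 + of_rat (1 / of_int D) * \<theta>"
    unfolding u1_def u2_def by (simp_all add: of_rat_divide)
  then have "u1 \<in> K" "u2 \<in> K" unfolding imag_quad_field_iff by blast+
  moreover have "m = 0 \<and> n = 0" if "of_int m * u1 + of_int n * u2 = 0" for m n :: int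
  proof -
    have "of_rat (of_int m) + of_rat (of_int n) * \<theta> = of_rat 0 + of_rat 0 * \<theta>"
      using that assms unfolding u1_def u2_def by (simp add: field_simps)
    from coords_unique[OF this] show ?thesis by simp
  qed
  moreover have "denom_lattice d D = {of_int m * u1 + of_int n * u2 | m n. True}"
    unfolding denom_lattice_def u1_def u2_def by (simp add: add_divide_distrib)
  ultimately show ?thesis unfolding lattice_in_def by blast
qed

lemma denom_lattice_subset_mult:
  assumes "E \<noteq> 0"
  shows "denom_lattice d D \<subseteq> denom_lattice d (D * E)"
proof
  fix z assume "z \<in> denom_lattice d D"
  then obtain m n where z: "z = (of_int m + of_int n * \<theta>) / of_int D"
    unfolding denom_lattice_iff by auto
  have "z = (of_int E * (of_int m + of_int n * \<theta>)) / (of_int E * of_int D)"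
    unfolding z using assms by simp
  also have "\<dots> = (of_int (m * E) + of_int (n * E) * \<theta>) / of_int (D * E)"
    by (simp add: algebra_simps)
  finally show "z \<in> denom_lattice d (D * E)" unfolding denom_lattice_iff by blast
qed

lemma imag_quad_field_in_denom_lattice:
  assumes "z \<in> K"
  shows "\<exists>D>0. z \<in> denom_lattice d D"
proof -
  obtain a b where z: "z = of_rat a + of_rat b * \<theta>" using assms unfolding imag_quad_field_iff by auto
  obtain p q where a: "a = Fract p q" "q > 0" by (cases a) auto
  obtain r s where b: "b = Fract r s" "s > 0" by (cases b) auto
  have "z = (of_int (p * s) + of_int (r * q) * \<theta>) / of_int (q * s)"
    unfolding z a b using a(2) b(2) by (simp add: of_rat_rat field_simps)
  moreover have "q * s > 0" using a(2) b(2) by simp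
  ultimately show ?thesis unfolding denom_lattice_iff by blast
qed

end

section \<open>The ring of integers\<close>

lemma squarefree_rat_square_is_int:
  fixes d M :: int and C :: rat
  assumes "squarefree d" "of_int d * C * C = of_int M"
  shows "\<exists>c. C = of_int c"
proof -
  obtain p q where C: "C = Fract p q" "q > 0" "coprime p q" by (cases C) auto
  have "of_int d * (of_int p / of_int q) * (of_int p / of_int q) = (of_int M :: rat)"
    using assms(2) C by (simp add: Fract_of_int_quotient)
  then have "of_int (d * p * p) = (of_int (M * q * q) :: rat)"
    using C(2) by (simp add: field_simps)
  then have "d * p * p = M * q * q" by linarith
  then have "q ^ 2 dvd d * p ^ 2" by (metis dvd_triv_right mult.assoc power2_eq_square)
  moreover have "coprime (q ^ 2) (p ^ 2)" using C(3) by (simp add: coprime_commute)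
  ultimately have "q ^ 2 dvd d" using coprime_dvd_mult_left_iff by blast
  then have "q dvd 1" by (rule squarefreeD[OF assms(1)])
  then have "q = 1" using C(2) by simp
  then show ?thesis using C(1) by (intro exI[of _ p]) (simp add: Fract_of_int_quotient)
qed

lemma squarefree_sum_squares_parity:
  fixes d T c N :: int
  assumes "squarefree d" "T^2 + d * c^2 = 4 * N"
  shows "(d mod 4 = 3 \<longrightarrow> (even T \<longleftrightarrow> even c)) \<and> (d mod 4 \<noteq> 3 \<longrightarrow> even T \<and> even c)"
proof -
  have "d mod 4 \<noteq> 0"
  proof
    assume "d mod 4 = 0"
    then have "(2::int)^2 dvd d" by (simp add: mod_eq_0_iff_dvd)
    then have "(2::int) dvd 1" by (rule squarefreeD[OF assms(1)])
    then show False by simp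
  qed
  define x y r where "x = T mod 4" and "y = c mod 4" and "r = d mod 4"
  have "4 dvd (T - x)" "4 dvd (c - y)" "4 dvd (d - r)"
    unfolding x_def y_def r_def by (simp_all add: minus_mod_eq_mult_div)
  then have "4 dvd (T - x) * (T + x) + d * ((c - y) * (c + y)) + (d - r) * y^2"
    by (intro dvd_add dvd_mult2 dvd_mult) auto
  also have "\<dots> = 4 * N - (x^2 + r * y^2)"
    using assms(2) by (simp add: algebra_simps power2_eq_square)
  finally have "4 dvd 4 * N - (x^2 + r * y^2)" .
  from dvd_diff[OF dvd_triv_left[of 4 N] this] have key: "(x^2 + r * y^2) mod 4 = 0" by simp
  have parity: "even T \<longleftrightarrow> even x" "even c \<longleftrightarrow> even y"
    unfolding x_def y_def by (simp_all add: even_iff_mod_2_eq_zero mod_mod_cancel)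
  have "x = 0 \<or> x = 1 \<or> x = 2 \<or> x = 3" "y = 0 \<or> y = 1 \<or> y = 2 \<or> y = 3" "r = 1 \<or> r = 2 \<or> r = 3"
    using \<open>d mod 4 \<noteq> 0\<close> unfolding x_def y_def r_def by auto
  then have "(r = 3 \<longrightarrow> (even x \<longleftrightarrow> even y)) \<and> (r \<noteq> 3 \<longrightarrow> even x \<and> even y)"
    using key by (elim disjE) (simp_all add: power2_eq_square)
  then show ?thesis using parity unfolding r_def by simp
qed

lemma map_poly_of_int_add:
  "map_poly (of_int :: int \<Rightarrow> 'a::ring_1) (p + q) = map_poly of_int p + map_poly of_int q"
  by (intro poly_eqI) (simp add: coeff_map_poly)

lemma map_poly_of_int_diff:
  "map_poly (of_int :: int \<Rightarrow> 'a::ring_1) (p - q) = map_poly of_int p - map_poly of_int q"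
  by (intro poly_eqI) (simp add: coeff_map_poly)

lemma map_poly_of_int_mult:
  "map_poly (of_int :: int \<Rightarrow> 'a::comm_ring_1) (p * q) = map_poly of_int p * map_poly of_int q"
  by (intro poly_eqI) (simp add: coeff_map_poly coeff_mult)

lemma poly_map_of_int_as_sum:
  assumes "r = 0 \<or> degree r < n"
  shows "poly (map_poly (of_int :: int \<Rightarrow> 'a::{comm_ring_1,ring_char_0}) r) x =
    (\<Sum>i<n. of_int (coeff r i) * x ^ i)"
proof -
  have "poly (map_poly (of_int :: int \<Rightarrow> 'a) r) x = (\<Sum>i\<le>degree r. of_int (coeff r i) * x ^ i)"
    by (simp add: poly_altdef coeff_map_poly degree_map_poly)
  also have "\<dots> = (\<Sum>i<n. of_int (coeff r i) * x ^ i)"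
    using assms by (cases "r = 0") (auto intro!: sum.mono_neutral_left intro: le_degree)
  finally show ?thesis .
qed

text \<open>Division by the monic \<open>p\<close> leaves a remainder of degree \<open>< deg p\<close>.\<close>

lemma poly_map_of_int_reduce:
  fixes x :: "'a::{comm_ring_1,ring_char_0}"
  assumes "lead_coeff p = 1" "poly (map_poly of_int p) x = 0"
  shows "\<exists>c. poly (map_poly of_int q) x = (\<Sum>i<degree p. of_int (c i) * x ^ i)"
proof -
  have "p \<noteq> 0" using assms(1) by auto
  obtain s r where sr: "pseudo_divmod q p = (s, r)" by (cases "pseudo_divmod q p") auto
  from pseudo_divmod[OF \<open>p \<noteq> 0\<close> sr] assms(1)
  have "q = p * s + r" "r = 0 \<or> degree r < degree p" by auto
  then have "poly (map_poly of_int q) x = (\<Sum>i<degree p. of_int (coeff r i) * x ^ i)"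
    using assms(2) by (simp add: map_poly_of_int_add map_poly_of_int_mult poly_map_of_int_as_sum)
  then show ?thesis by blast
qed

definition omega :: "int \<Rightarrow> complex" where
  "omega d = (if d mod 4 = 3 then (1 + sqrt_neg d) / 2 else sqrt_neg d)"

locale imag_quadratic_squarefree = imag_quadratic +
  assumes d_squarefree: "squarefree d"
begin

abbreviation \<omega> :: complex where
  "\<omega> \<equiv> omega d"

lemma omega_in_field: "\<omega> \<in> K"
proof (cases "d mod 4 = 3")
  case True
  then have "\<omega> = of_rat (1/2) + of_rat (1/2) * \<theta>"
    by (simp add: omega_def of_rat_divide add_divide_distrib)
  then show ?thesis unfolding imag_quad_field_iff by blast
qed (use imag_quad_field_sqrt_neg in \<open>simp add: omega_def\<close>)

lemma Im_omega_neq_0: "Im \<omega> \<noteq> 0"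
  using d_pos by (simp add: omega_def)

lemma omega_squared: "\<exists>t u :: int. \<omega> * \<omega> = of_int t * \<omega> + of_int u"
proof (cases "d mod 4 = 3")
  case True
  then have "4 dvd (d + 1)" by presburger
  then obtain q where "d = 4 * q - 1" by (metis add_diff_cancel dvdE)
  then have d: "(of_int d :: complex) = 4 * of_int q - 1" by simp
  have "\<omega> * \<omega> = (1 + 2 * \<theta> + \<theta> * \<theta>) / 4"
    using True by (simp add: omega_def algebra_simps)
  also have "\<dots> = (1 + 2 * \<theta> - of_int d) / 4"
    using d_pos by (simp add: sqrt_neg_squared)
  also have "\<dots> = of_int 1 * \<omega> + of_int (- q)"
    unfolding d using True by (simp add: omega_def field_simps)
  finally show ?thesis by blast
next
  case False
  then have "\<omega> * \<omega> = of_int 0 * \<omega> + of_int (- d)"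
    using d_pos by (simp add: omega_def sqrt_neg_squared)
  then show ?thesis by blast
qed

lemma integral_basis_in_ring_of_integers: "of_int n + of_int k * \<omega> \<in> ring_of_integers K"
proof -
  obtain t u where tu: "\<omega> * \<omega> = of_int t * \<omega> + of_int u" using omega_squared by blast
  let ?p = "[:n*n + k*n*t - k*k*u, -(2*n + k*t), 1:]"
  have "poly (map_poly of_int ?p) (of_int n + of_int k * \<omega>)
      = of_int k * of_int k * (\<omega> * \<omega> - of_int t * \<omega> - of_int u)"
    by (simp add: map_poly_pCons algebra_simps)
  then have "poly (map_poly of_int ?p) (of_int n + of_int k * \<omega>) = 0" using tu by simp
  then have "alg_integer (of_int n + of_int k * \<omega>)"
    unfolding alg_integer_def by (intro exI[of _ ?p]) simp
  moreover have "of_int n + of_int k * \<omega> \<in> K"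
    by (intro imag_quad_field_add imag_quad_field_mult imag_quad_field_of_int omega_in_field)
  ultimately show ?thesis unfolding ring_of_integers_def by blast
qed

text \<open>The trace \<open>T\<close> fixes the rational part; squarefreeness of \<open>d\<close> makes \<open>c\<close> integral.\<close>

lemma quadratic_root_half_integral:
  assumes "\<alpha> = of_rat a + of_rat b * \<theta>" "b \<noteq> 0" "\<alpha> * \<alpha> = of_int T * \<alpha> - of_int N"
  shows "\<exists>c. \<alpha> = of_int T / 2 + of_int c / 2 * \<theta> \<and> T^2 + d * c^2 = 4 * N"
proof -
  have "\<alpha> * \<alpha> = of_rat (a * a - of_int d * b * b) + of_rat (2 * a * b) * \<theta>"
    unfolding assms(1) using d_pos
    by (simp add: algebra_simps sqrt_neg_squared of_rat_add of_rat_mult of_rat_diff)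
  moreover have "of_int T * \<alpha> - of_int N = of_rat (of_int T * a - of_int N) + of_rat (of_int T * b) * \<theta>"
    unfolding assms(1) by (simp add: of_rat_mult of_rat_diff algebra_simps)
  ultimately have e: "a * a - of_int d * b * b = of_int T * a - of_int N" "2 * a * b = of_int T * b"
    using coords_unique assms(3) by metis+
  then have T: "of_int T = 2 * a" using assms(2) by (metis mult.commute mult_right_cancel)
  then have N: "of_int N = a * a + of_int d * b * b" using e(1) by (simp add: algebra_simps)
  have "of_int d * (2 * b) * (2 * b) = (of_int (4 * N - T * T) :: rat)"
    using N T by (simp add: algebra_simps)
  then obtain c where c: "2 * b = of_int c"
    using squarefree_rat_square_is_int[OF d_squarefree] by blast
  have "of_int (T^2 + d * c^2) = (of_int (4 * N) :: rat)"
    using N T c[symmetric] by (simp add: algebra_simps power2_eq_square)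
  then have "T^2 + d * c^2 = 4 * N" by linarith
  moreover have "of_rat a = (of_int T / 2 :: complex)" "of_rat b = (of_int c / 2 :: complex)"
    using arg_cong[OF T, of "of_rat :: rat \<Rightarrow> complex"] arg_cong[OF c, of "of_rat :: rat \<Rightarrow> complex"]
    by (simp_all add: of_rat_mult field_simps)
  then have "\<alpha> = of_int T / 2 + of_int c / 2 * \<theta>" unfolding assms(1) by (simp only:)
  ultimately show ?thesis by blast
qed

lemma quadratic_root_in_integral_basis:
  assumes "\<alpha> \<in> K" "\<alpha> * \<alpha> = of_int T * \<alpha> - of_int N"
  shows "\<exists>n k :: int. \<alpha> = of_int n + of_int k * \<omega>"
proof -
  obtain a b where ab: "\<alpha> = of_rat a + of_rat b * \<theta>"
    using assms(1) unfolding imag_quad_field_iff by blast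
  show ?thesis
  proof (cases "b = 0")
    case True
    have "algebraic_int \<alpha>"
    proof
      show "lead_coeff [:of_int N, - of_int T, 1 :: complex:] = 1" by simp
      show "\<forall>i. coeff [:of_int N, - of_int T, 1 :: complex:] i \<in> \<int>"
        by (auto simp: coeff_pCons split: nat.splits)
      show "poly [:of_int N, - of_int T, 1 :: complex:] \<alpha> = 0"
        using assms(2) by (simp add: algebra_simps)
    qed
    moreover have "\<alpha> \<in> \<rat>" using ab True by simp
    ultimately have "\<alpha> \<in> \<int>" by (rule rational_algebraic_int_is_int)
    then obtain n where "\<alpha> = of_int n" by (auto elim: Ints_cases)
    then show ?thesis by (intro exI[of _ n] exI[of _ 0]) simp
  next
    case False
    then obtain c where \<alpha>: "\<alpha> = of_int T / 2 + of_int c / 2 * \<theta>" and "T^2 + d * c^2 = 4 * N"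
      using quadratic_root_half_integral[OF ab _ assms(2)] by blast
    note parity = squarefree_sum_squares_parity[OF d_squarefree this(2)]
    show ?thesis
    proof (cases "d mod 4 = 3")
      case True
      then have "even (T - c)" using parity by simp
      then obtain n where "T = 2 * n + c" by (metis add.commute diff_add_cancel evenE)
      then have "\<alpha> = of_int n + of_int c * \<omega>" unfolding \<alpha> using True
        by (simp add: omega_def field_simps)
      then show ?thesis by blast
    next
      case False
      then obtain n k where "T = 2 * n" "c = 2 * k" using parity by (auto elim!: evenE)
      then have "\<alpha> = of_int n + of_int k * \<omega>" unfolding \<alpha> using False
        by (simp add: omega_def field_simps)
      then show ?thesis by blast
    qed
  qed
qed

text \<open>
  \<open>\<int>[x]\<close> is spanned by \<open>1, \<dots>, x\<^sup>n\<^sup>-\<^sup>1\<close>, so it lies in one \<open>denom_lattice\<close>; for non-real \<open>x\<close>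
  it contains the independent elements \<open>1\<close> and \<open>x\<close>.
\<close>

lemma int_poly_values_lattice_in:
  assumes "x \<in> K" "Im x \<noteq> 0" "lead_coeff p = 1" "poly (map_poly of_int p) x = 0"
  shows "lattice_in K (range (\<lambda>q. poly (map_poly of_int q) x))" (is "lattice_in K ?M")
proof -
  let ?n = "degree p"
  have "\<forall>i. \<exists>D>0. x ^ i \<in> denom_lattice d D"
    using imag_quad_field_in_denom_lattice[OF imag_quad_field_power[OF assms(1)]] by blast
  then obtain Di where Di: "\<And>i. Di i > 0" "\<And>i. x ^ i \<in> denom_lattice d (Di i)" by metis
  define D where "D = (\<Prod>i<?n. Di i)"
  have "D > 0" unfolding D_def using Di by (intro prod_pos) auto
  then have D_nz: "D \<noteq> 0" by simp
  have xi: "x ^ i \<in> denom_lattice d D" if "i < ?n" for i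
  proof -
    have "D = Di i * (\<Prod>j\<in>{..<?n} - {i}. Di j)" unfolding D_def using that by (simp add: prod.remove)
    moreover have "(\<Prod>j\<in>{..<?n} - {i}. Di j) \<noteq> 0" using Di(1) by (simp add: prod_pos less_imp_neq[symmetric])
    ultimately show ?thesis using denom_lattice_subset_mult Di(2) by blast
  qed
  have M_sub: "?M \<subseteq> denom_lattice d D"
  proof
    fix y assume "y \<in> ?M"
    then obtain c where "y = (\<Sum>i<?n. of_int (c i) * x ^ i)"
      using poly_map_of_int_reduce[OF assms(3,4)] by blast
    also have "\<dots> \<in> denom_lattice d D"
      using lattice_in_add_subgroup[OF denom_lattice_lattice_in[OF D_nz]] xi
      by (intro add_subgroup_sum add_subgroup_of_int_mult) auto
    finally show "y \<in> denom_lattice d D" .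
  qed
  have M_subgroup: "add_subgroup ?M"
    unfolding add_subgroup_def
  proof (intro conjI ballI)
    show "0 \<in> ?M" by (rule range_eqI[of _ _ 0]) simp
    fix y z assume "y \<in> ?M" "z \<in> ?M"
    then obtain q r where "y = poly (map_poly of_int q) x" "z = poly (map_poly of_int r) x" by blast
    then have "y - z = poly (map_poly of_int (q - r)) x"
      by (simp add: map_poly_of_int_diff)
    then show "y - z \<in> ?M" by blast
  qed
  have "1 = poly (map_poly of_int 1) x" "x = poly (map_poly of_int [:0, 1:]) x"
    by (simp_all add: map_poly_pCons)
  then have "1 \<in> ?M" "x \<in> ?M" by blast+
  moreover have "Im (x * cnj 1) \<noteq> 0" using assms(2) by simp
  moreover have "?M \<subseteq> K" using M_sub denom_lattice_subset_field[OF D_nz] by blast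
  ultimately show ?thesis
    using lattice_in_full_rank_subgroup[OF denom_lattice_lattice_in[OF D_nz] M_subgroup M_sub] by blast
qed

lemma alg_integer_quadratic:
  assumes "x \<in> K" "alg_integer x"
  shows "\<exists>T N :: int. x * x = of_int T * x - of_int N"
proof -
  obtain p where p: "lead_coeff p = 1" "poly (map_poly of_int p) x = 0"
    using assms(2) unfolding alg_integer_def by blast
  show ?thesis
  proof (cases "Im x = 0")
    case True
    obtain a b where "x = of_rat a + of_rat b * \<theta>" using assms(1) unfolding imag_quad_field_iff by blast
    with True sqrt_d_pos have "x = of_rat a" by simp
    moreover have "algebraic_int x" unfolding algebraic_int_altdef_ipoly using p by blast
    ultimately have "x \<in> \<int>" by (intro rational_algebraic_int_is_int) simp_all
    then obtain n where "x = of_int n" by (auto elim: Ints_cases)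
    then have "x * x = of_int n * x - of_int 0" by simp
    then show ?thesis by blast
  next
    case False
    let ?M = "range (\<lambda>q. poly (map_poly of_int q) x)"
    have "\<forall>y\<in>?M. x * y \<in> ?M"
    proof
      fix y assume "y \<in> ?M"
      then obtain q where "y = poly (map_poly of_int q) x" by blast
      then have "x * y = poly (map_poly of_int (pCons 0 q)) x" by (simp add: map_poly_pCons)
      then show "x * y \<in> ?M" by blast
    qed
    then show ?thesis
      by (rule lattice_multiplier_quadratic[OF int_poly_values_lattice_in[OF assms(1) False p]])
  qed
qed

lemma ring_of_integers_iff: "x \<in> ring_of_integers K \<longleftrightarrow> (\<exists>n k :: int. x = of_int n + of_int k * \<omega>)"
proof
  assume "x \<in> ring_of_integers K"
  then have "x \<in> K" "alg_integer x" unfolding ring_of_integers_def by auto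
  then obtain T N where "x * x = of_int T * x - of_int N" using alg_integer_quadratic by blast
  then show "\<exists>n k :: int. x = of_int n + of_int k * \<omega>"
    using quadratic_root_in_integral_basis \<open>x \<in> K\<close> by blast
qed (use integral_basis_in_ring_of_integers in blast)

section \<open>Orders\<close>

lemma order_of_conductor_iff:
  "z \<in> order_of_conductor K m \<longleftrightarrow> (\<exists>n k :: int. z = of_int n + of_int k * of_nat m * \<omega>)"
proof
  assume "z \<in> order_of_conductor K m"
  then obtain n x where z: "z = of_int n + of_nat m * x" and "x \<in> ring_of_integers K"
    unfolding order_of_conductor_def by blast
  then obtain n' k where "x = of_int n' + of_int k * \<omega>" using ring_of_integers_iff by blast
  then have "z = of_int (n + int m * n') + of_int k * of_nat m * \<omega>"
    unfolding z by (simp add: algebra_simps)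
  then show "\<exists>n k :: int. z = of_int n + of_int k * of_nat m * \<omega>" by blast
next
  assume "\<exists>n k :: int. z = of_int n + of_int k * of_nat m * \<omega>"
  then obtain n k :: int where z: "z = of_int n + of_int k * of_nat m * \<omega>" by blast
  have "of_int 0 + of_int k * \<omega> \<in> ring_of_integers K"
    using ring_of_integers_iff by blast
  moreover have "z = of_int n + of_nat m * (of_int 0 + of_int k * \<omega>)"
    unfolding z by (simp add: algebra_simps)
  ultimately show "z \<in> order_of_conductor K m" unfolding order_of_conductor_def by blast
qed

lemma order_of_conductor_of_int: "of_int n \<in> order_of_conductor K m"
  unfolding order_of_conductor_iff by (intro exI[of _ n] exI[of _ 0]) simp

lemma order_of_conductor_subset_field: "order_of_conductor K m \<subseteq> K"
proof
  fix z assume "z \<in> order_of_conductor K m"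
  then obtain n k :: int where "z = of_int n + of_int (k * int m) * \<omega>"
    unfolding order_of_conductor_iff by auto
  then show "z \<in> K"
    by (simp only:) (intro imag_quad_field_add imag_quad_field_mult imag_quad_field_of_int omega_in_field)
qed

lemma order_of_conductor_add_subgroup: "add_subgroup (order_of_conductor K m)"
  unfolding add_subgroup_def
proof (intro conjI ballI)
  show "0 \<in> order_of_conductor K m" using order_of_conductor_of_int[of 0] by simp
  fix x y assume "x \<in> order_of_conductor K m" "y \<in> order_of_conductor K m"
  then obtain n k n' k' :: int where "x = of_int n + of_int k * of_nat m * \<omega>"
    "y = of_int n' + of_int k' * of_nat m * \<omega>"
    unfolding order_of_conductor_iff by blast
  then have "x - y = of_int (n - n') + of_int (k - k') * of_nat m * \<omega>" by (simp add: algebra_simps)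
  then show "x - y \<in> order_of_conductor K m" unfolding order_of_conductor_iff by blast
qed

lemma order_of_conductor_mult:
  assumes "x \<in> order_of_conductor K m" "y \<in> order_of_conductor K m"
  shows "x * y \<in> order_of_conductor K m"
proof -
  obtain n k n' k' :: int where x: "x = of_int n + of_int k * of_nat m * \<omega>"
    and y: "y = of_int n' + of_int k' * of_nat m * \<omega>"
    using assms unfolding order_of_conductor_iff by blast
  obtain t u where tu: "\<omega> * \<omega> = of_int t * \<omega> + of_int u" using omega_squared by blast
  have "x * y = of_int n * of_int n' + (of_int n * of_int k' + of_int n' * of_int k) * of_nat m * \<omega>
      + of_int k * of_int k' * of_nat m * of_nat m * (\<omega> * \<omega>)"
    unfolding x y by (simp add: algebra_simps)
  also have "\<dots> = of_int (n * n' + k * k' * int m * int m * u)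
      + of_int (n * k' + n' * k + k * k' * int m * t) * of_nat m * \<omega>"
    unfolding tu by (simp add: algebra_simps)
  finally show ?thesis unfolding order_of_conductor_iff by blast
qed

lemma order_of_conductor_antimono:
  assumes "m dvd f"
  shows "order_of_conductor K f \<subseteq> order_of_conductor K m"
proof
  fix z assume "z \<in> order_of_conductor K f"
  then obtain n k :: int where "z = of_int n + of_int k * of_nat f * \<omega>"
    unfolding order_of_conductor_iff by blast
  moreover obtain q where "f = m * q" using assms by blast
  ultimately have "z = of_int n + of_int (k * int q) * of_nat m * \<omega>" by (simp add: algebra_simps)
  then show "z \<in> order_of_conductor K m" unfolding order_of_conductor_iff by blast
qed

lemma order_of_conductor_lattice_in:
  assumes "m \<ge> 1"
  shows "lattice_in K (order_of_conductor K m)"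
proof -
  have "1 \<in> K" "of_nat m * \<omega> \<in> K"
    using imag_quad_field_of_int[of 1] imag_quad_field_of_int[of "int m"] omega_in_field
      imag_quad_field_mult by auto
  moreover have "i = 0 \<and> j = 0" if "of_int i * 1 + of_int j * (of_nat m * \<omega>) = 0" for i j :: int
  proof -
    have "of_int j * of_nat m * Im \<omega> = 0" using arg_cong[OF that, of Im] by simp
    then have "j = 0" using assms Im_omega_neq_0 by simp
    then show ?thesis using that by simp
  qed
  moreover have "order_of_conductor K m = {of_int i * 1 + of_int j * (of_nat m * \<omega>) | i j. True}"
    by (rule set_eqI) (simp add: order_of_conductor_iff mult.assoc)
  ultimately show ?thesis unfolding lattice_in_def by blast
qed

text \<open>The conductor is the generator of the group of \<open>\<omega>\<close>-coordinates of \<open>R\<close>.\<close>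

lemma add_subgroup_between_orders:
  assumes "f \<ge> 1" and R: "add_subgroup R" "order_of_conductor K f \<subseteq> R" "R \<subseteq> ring_of_integers K"
  shows "\<exists>m. m \<ge> 1 \<and> m dvd f \<and> R = order_of_conductor K m"
proof -
  let ?S = "{k. \<exists>n. of_int n + of_int k * \<omega> \<in> R}"
  have ints: "of_int n \<in> R" for n using R(2) order_of_conductor_of_int by blast
  have "add_subgroup ?S"
    using add_subgroup_second_coords[OF R(1), of 1 \<omega>] by simp
  then obtain g where g: "g \<ge> 0" "?S = {j * g | j. True}"
    using int_add_subgroup_eq_multiples by blast
  have "of_int 0 + of_int 1 * of_nat f * \<omega> \<in> order_of_conductor K f"
    unfolding order_of_conductor_iff by blast
  then have "of_int 0 + of_int (int f) * \<omega> \<in> R" using R(2) by auto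
  then have "int f \<in> ?S" by blast
  then obtain j0 where j0: "int f = j0 * g" using g by auto
  define m where "m = nat g"
  have gm: "int m = g" unfolding m_def using g by simp
  have "m dvd f" using j0 gm by (metis dvd_triv_right of_nat_dvd_iff)
  moreover have "m \<ge> 1" using j0 gm assms(1) by (cases "m = 0") auto
  moreover have "R = order_of_conductor K m"
  proof (intro set_eqI iffI)
    fix z assume "z \<in> R"
    then obtain n k where z: "z = of_int n + of_int k * \<omega>"
      using R(3) ring_of_integers_iff by blast
    then have "k \<in> ?S" using \<open>z \<in> R\<close> by blast
    then obtain j where "k = j * int m" using g gm by auto
    then have "z = of_int n + of_int j * of_nat m * \<omega>" unfolding z by simp
    then show "z \<in> order_of_conductor K m" unfolding order_of_conductor_iff by blast
  next
    fix z assume "z \<in> order_of_conductor K m"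
    then obtain n j :: int where z: "z = of_int n + of_int j * of_nat m * \<omega>"
      unfolding order_of_conductor_iff by blast
    have "j * g \<in> ?S" using g by blast
    then obtain n0 where "of_int n0 + of_int (j * g) * \<omega> \<in> R" by blast
    from add_subgroup_diff[OF R(1) this ints[of "n0 - n"]] show "z \<in> R"
      unfolding z gm[symmetric] by (simp add: algebra_simps)
  qed
  ultimately show ?thesis by blast
qed

end

section \<open>Multiplier rings\<close>

definition multiplier_ring :: "complex set \<Rightarrow> complex set \<Rightarrow> complex set" where
  "multiplier_ring K L = {\<alpha> \<in> K. \<forall>x\<in>L. \<alpha> * x \<in> L}"

lemma has_conductor_iff_multiplier_ring:
  "has_conductor K L m \<longleftrightarrow> m \<ge> 1 \<and> multiplier_ring K L = order_of_conductor K m"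
  unfolding has_conductor_def multiplier_ring_def ..

context imag_quadratic_squarefree
begin

lemma multiplier_ring_add_subgroup:
  assumes "add_subgroup L"
  shows "add_subgroup (multiplier_ring K L)"
  using add_subgroup_diff[OF assms] add_subgroup_0[OF assms] imag_quad_field_diff
    imag_quad_field_of_int[of 0]
  unfolding add_subgroup_def multiplier_ring_def by (auto simp: left_diff_distrib)

lemma multiplier_ring_subset_ring_of_integers:
  assumes "lattice_in K L"
  shows "multiplier_ring K L \<subseteq> ring_of_integers K"
proof
  fix \<alpha> assume "\<alpha> \<in> multiplier_ring K L"
  then have "\<alpha> \<in> K" "\<forall>x\<in>L. \<alpha> * x \<in> L" unfolding multiplier_ring_def by auto
  then show "\<alpha> \<in> ring_of_integers K"
    using lattice_multiplier_quadratic[OF assms] quadratic_root_in_integral_basis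
      ring_of_integers_iff by meson
qed

lemma conductor_dvd_if_order_subset_multiplier_ring:
  assumes "lattice_in K L" "f \<ge> 1" "order_of_conductor K f \<subseteq> multiplier_ring K L"
  shows "\<exists>m. has_conductor K L m \<and> m dvd f"
  using add_subgroup_between_orders[OF assms(2) _ assms(3)
      multiplier_ring_subset_ring_of_integers[OF assms(1)]]
    multiplier_ring_add_subgroup[OF lattice_in_add_subgroup[OF assms(1)]]
  unfolding has_conductor_iff_multiplier_ring by blast

lemma conductor_dvd_preimage_lattice:
  assumes "lattice_in K \<aa>" "has_conductor K \<aa> m" "m dvd f" "f \<ge> 1"
    and B: "B = {y. y \<in> order_of_conductor K f \<and> y * w \<in> \<aa>}"
    and h: "h1 \<in> B" "h2 \<in> B" "Im (h2 * cnj h1) \<noteq> 0"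
  shows "lattice_in K B \<and> (\<exists>m'. has_conductor K B m' \<and> m' dvd f)"
proof
  have "add_subgroup B"
    using add_subgroup_diff[OF order_of_conductor_add_subgroup]
      add_subgroup_diff[OF lattice_in_add_subgroup[OF assms(1)]]
      add_subgroup_0[OF order_of_conductor_add_subgroup]
      add_subgroup_0[OF lattice_in_add_subgroup[OF assms(1)]]
    unfolding add_subgroup_def B by (auto simp: left_diff_distrib)
  moreover have "B \<subseteq> order_of_conductor K f" unfolding B by blast
  ultimately show B_lattice: "lattice_in K B"
    using lattice_in_full_rank_subgroup[OF order_of_conductor_lattice_in[OF \<open>f \<ge> 1\<close>] _ _ _ h]
      order_of_conductor_subset_field by blast
  have "\<alpha> \<in> multiplier_ring K B" if "\<alpha> \<in> order_of_conductor K f" for \<alpha>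
  proof -
    have "\<alpha> \<in> multiplier_ring K \<aa>"
      using that order_of_conductor_antimono[OF \<open>m dvd f\<close>] assms(2)
      unfolding has_conductor_iff_multiplier_ring by blast
    then show ?thesis
      using that order_of_conductor_mult order_of_conductor_subset_field
      unfolding multiplier_ring_def B by (auto simp: mult.assoc)
  qed
  then show "\<exists>m'. has_conductor K B m' \<and> m' dvd f"
    using conductor_dvd_if_order_subset_multiplier_ring[OF B_lattice \<open>f \<ge> 1\<close>] by blast
qed

end

section \<open>Elliptic curves in \<open>\<complex>/\<O>\<^sub>f \<times> \<complex>/\<aa>\<close>\<close>

lemma image_mult_line_lattice:
  assumes "c \<noteq> 0"
  shows "(\<lambda>z. c * z) ` line_lattice (prod_lattice A B) (v1, v2) =
    {y. y * (v1 / c) \<in> A \<and> y * (v2 / c) \<in> B}"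
proof (intro set_eqI iffI)
  fix y assume "y \<in> {y. y * (v1 / c) \<in> A \<and> y * (v2 / c) \<in> B}"
  then have "y / c \<in> line_lattice (prod_lattice A B) (v1, v2)"
    unfolding line_lattice_def prod_lattice_def by (simp add: field_simps)
  then show "y \<in> (\<lambda>z. c * z) ` line_lattice (prod_lattice A B) (v1, v2)"
    using assms by (intro image_eqI[of _ _ "y / c"]) simp_all
qed (use assms in \<open>auto simp: line_lattice_def prod_lattice_def\<close>)

lemma Im_mult_cnj_scale: "Im ((c * z2) * cnj (c * z1)) = (cmod c)\<^sup>2 * Im (z2 * cnj z1)"
proof -
  have "(c * z2) * cnj (c * z1) = (c * cnj c) * (z2 * cnj z1)" by (simp add: algebra_simps)
  also have "\<dots> = of_real ((cmod c)\<^sup>2) * (z2 * cnj z1)" by (simp only: complex_norm_square)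
  finally have eq: "(c * z2) * cnj (c * z1) = of_real ((cmod c)\<^sup>2) * (z2 * cnj z1)" .
  have "Im (of_real r * w) = r * Im w" for r w by simp
  then show ?thesis unfolding eq .
qed

theorem lemma3p2:
  fixes d :: int and f :: nat and \<aa> :: "complex set" and v :: "complex \<times> complex"
  assumes "d > 0" and "squarefree d"
    and "f \<ge> 1"
    and "lattice_in (imag_quad_field d) \<aa>"
    and "\<exists>m. has_conductor (imag_quad_field d) \<aa> m \<and> m dvd f"
    and "elliptic_subtorus (prod_lattice (order_of_conductor (imag_quad_field d) f) \<aa>) v"
  shows "\<exists>c :: complex. c \<noteq> 0 \<and>
     lattice_in (imag_quad_field d)
       ((\<lambda>z. c * z) ` line_lattice (prod_lattice (order_of_conductor (imag_quad_field d) f) \<aa>) v) \<and>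
     (\<exists>m. has_conductor (imag_quad_field d)
       ((\<lambda>z. c * z) ` line_lattice (prod_lattice (order_of_conductor (imag_quad_field d) f) \<aa>) v) m
       \<and> m dvd f)"
proof -
  interpret imag_quadratic_squarefree d
    using assms(1,2) by unfold_locales
  let ?Of = "order_of_conductor K f"
  obtain v1 v2 where v: "v = (v1, v2)" by (cases v)
  obtain z1 z2 where z: "z1 \<in> line_lattice (prod_lattice ?Of \<aa>) v" "z2 \<in> line_lattice (prod_lattice ?Of \<aa>) v"
    "Im (z2 * cnj z1) \<noteq> 0" and "v \<noteq> (0, 0)"
    using assms(6) unfolding elliptic_subtorus_def by blast
  obtain m where m: "has_conductor K \<aa> m" "m dvd f" using assms(5) by blast
  show ?thesis
  proof (cases "v1 = 0")
    case True
    then have "v2 \<noteq> 0" using \<open>v \<noteq> (0, 0)\<close> v by simp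
    \<comment> \<open>the curve is \<open>{0} \<times> \<complex>/\<aa>\<close>\<close>
    have "(\<lambda>z. v2 * z) ` line_lattice (prod_lattice ?Of \<aa>) v = \<aa>"
      using image_mult_line_lattice[OF \<open>v2 \<noteq> 0\<close>] True \<open>v2 \<noteq> 0\<close> order_of_conductor_of_int[of 0]
      unfolding v by simp
    then show ?thesis using \<open>v2 \<noteq> 0\<close> assms(4) m by (intro exI[of _ v2]) auto
  next
    case False
    let ?B = "{y. y \<in> ?Of \<and> y * (v2 / v1) \<in> \<aa>}"
    have B: "(\<lambda>z. v1 * z) ` line_lattice (prod_lattice ?Of \<aa>) v = ?B"
      using image_mult_line_lattice[OF False] False unfolding v by simp
    have "v1 * z1 \<in> ?B" "v1 * z2 \<in> ?B" using z(1,2) B by blast+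
    moreover have "Im ((v1 * z2) * cnj (v1 * z1)) \<noteq> 0"
      unfolding Im_mult_cnj_scale using z(3) False by simp
    ultimately have "lattice_in K ?B \<and> (\<exists>m'. has_conductor K ?B m' \<and> m' dvd f)"
      by (rule conductor_dvd_preimage_lattice[OF assms(4) m assms(3) refl])
    then show ?thesis using B False by (intro exI[of _ v1]) simp
  qed
qed

end
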